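(* Let $J$ be exponentially localized, even, twice continuously differentiable, with $\int J=1$, and let $\gamma>0$. Let $D=\partial_x(1-\partial_x)^{-1}$ and $\delta$ the Dirac distribution. Then there is a convolution operator $J_2$, bounded from $H^1_\gamma$ to $H^1_\gamma$ and commuting with $D$, such that $(J-\delta)\ast u=D(J_2\ast u)=J_2\ast(Du)$. In particular, the composition $u\mapsto J_2\ast(Du)$ is bounded from $M^{1,2}_{\gamma-1}$ to $H^1_\gamma$ (with $D:M^{1,2}_{\gamma-1}\to H^1_\gamma$ bounded and $J_2:H^1_\gamma\to H^1_\gamma$ bounded).
   Context: $\langle x\rangle=(1+x^2)^{1/2}$; $L^2_\gamma$, $H^1_\gamma$ are completions of $C_0^\infty(\mathbb{R})$ under $(\int|u\langle x\rangle^\gamma|^2)^{1/2}$ and $\|u\|_{L^2_\gamma}+\|\partial_xu\|_{L^2_\gamma}$; $M^{1,2}_\gamma$ is the completion under $\big(\|u\langle x\rangle^\gamma\|_{L^2}^2+\|\partial_xu\langle x\rangle^{\gamma+1}\|_{L^2}^2\big)^{1/2}$. *)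

theory Defs
  imports "HOL-Analysis.Analysis"
begin

definition jbr :: "real \<Rightarrow> real" where
  "jbr x = sqrt (1 + x\<^sup>2)"

definition test_fun :: "(real \<Rightarrow> real) \<Rightarrow> bool" where
  "test_fun u \<longleftrightarrow> (\<exists>R. \<forall>x. R < \<bar>x\<bar> \<longrightarrow> u x = 0) \<and>
                   (\<forall>k x. ((deriv ^^ k) u) differentiable (at x))"

definition conv :: "(real \<Rightarrow> real) \<Rightarrow> (real \<Rightarrow> real) \<Rightarrow> real \<Rightarrow> real" where
  "conv g u x = (\<integral>y. g (x - y) * u y \<partial>lborel)"

text \<open>Resolvent (1 - d/dx)^(-1): the bounded solution v of v - v' = u.\<close>
definition resolv :: "(real \<Rightarrow> real) \<Rightarrow> real \<Rightarrow> real" where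
  "resolv u x = (\<integral>y. indicator {x..} y * (exp (x - y) * u y) \<partial>lborel)"

definition Dop :: "(real \<Rightarrow> real) \<Rightarrow> real \<Rightarrow> real" where
  "Dop u = deriv (resolv u)"

definition L2w :: "real \<Rightarrow> (real \<Rightarrow> real) \<Rightarrow> real" where
  "L2w \<gamma> u = sqrt (\<integral>x. (u x * jbr x powr \<gamma>)\<^sup>2 \<partial>lborel)"

definition in_H1w :: "real \<Rightarrow> (real \<Rightarrow> real) \<Rightarrow> bool" where
  "in_H1w \<gamma> u \<longleftrightarrow> (\<forall>x. u differentiable (at x)) \<and>
     integrable lborel (\<lambda>x. (u x * jbr x powr \<gamma>)\<^sup>2) \<and>
     integrable lborel (\<lambda>x. (deriv u x * jbr x powr \<gamma>)\<^sup>2)"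

definition H1w_norm :: "real \<Rightarrow> (real \<Rightarrow> real) \<Rightarrow> real" where
  "H1w_norm \<gamma> u = L2w \<gamma> u + L2w \<gamma> (deriv u)"

definition M12_norm :: "real \<Rightarrow> (real \<Rightarrow> real) \<Rightarrow> real" where
  "M12_norm \<gamma> u = sqrt ((\<integral>x. (u x * jbr x powr \<gamma>)\<^sup>2 \<partial>lborel)
                        + (\<integral>x. (deriv u x * jbr x powr (\<gamma> + 1))\<^sup>2 \<partial>lborel))"

definition exp_localized :: "(real \<Rightarrow> real) \<Rightarrow> bool" where
  "exp_localized J \<longleftrightarrow> (\<exists>C \<eta>. 0 < \<eta> \<and> (\<forall>x. \<bar>J x\<bar> \<le> C * exp (- \<eta> * \<bar>x\<bar>)))"

end

theory Submission
  imports Defs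
begin

text \<open>Let \<open>K(z) = [z \<le> 0] - \<integral>\<^sub>z\<^sup>\<infinity> J\<close> be the primitive of \<open>J - \<delta>\<close>; since \<open>\<integral> J = 1\<close>, it decays
  exponentially on both sides. From \<open>K * u' = J * u - u\<close>, the kernel \<open>J2 = \<delta> + K - J\<close> satisfies
  \<open>\<partial>(J2 * u) = (1 - \<partial>)(J * u - u)\<close>, so \<open>D(J2 * u)\<close> and \<open>J2 * Du\<close> both equal \<open>J * u - u\<close>: in each
  case both sides are bounded solutions of one equation \<open>v - v' = w\<close>, and bounded solutions of
  \<open>v' = v\<close> vanish.
  The weighted bounds rest on Peetre's inequality \<open>\<langle>x\<rangle> \<le> \<surd>2 \<langle>x - y\<rangle> \<langle>y\<rangle>\<close>, which yields the Young
  inequality \<open>\<parallel>k * w\<parallel>\<^sub>L\<^sub>2\<^sub>\<gamma> \<le> 2\<^sup>\<gamma>\<^sup>/\<^sup>2 \<parallel>k \<langle>\<cdot>\<rangle>\<^sup>\<gamma>\<parallel>\<^sub>L\<^sub>1 \<parallel>w\<parallel>\<^sub>L\<^sub>2\<^sub>\<gamma>\<close> for the exponentially decaying kernels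
  \<open>K - J\<close> and \<open>[z \<le> 0] e\<^sup>z\<close> (the kernel of \<open>(1 - \<partial>)\<^sup>-\<^sup>1\<close>). On test functions \<open>Du = (1 - \<partial>)\<^sup>-\<^sup>1 u'\<close>,
  which is thus controlled by \<open>\<parallel>u'\<parallel>\<^sub>L\<^sub>2\<^sub>\<gamma>\<close>, itself bounded by the \<open>M\<^sup>1\<^sup>,\<^sup>2\<^sub>\<gamma>\<^sub>-\<^sub>1\<close> norm of \<open>u\<close>.\<close>

lemma integrable_if_abs_le:
  fixes F G :: "real \<Rightarrow> real"
  assumes "F \<in> borel_measurable borel" "integrable lborel G" "\<And>t. \<bar>F t\<bar> \<le> G t"
  shows "integrable lborel F"
proof (rule Bochner_Integration.integrable_bound[OF assms(2)])
  show "AE t in lborel. norm (F t) \<le> norm (G t)"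
    using assms(3) by (intro AE_I2) (metis abs_ge_zero abs_of_nonneg order_trans real_norm_def)
qed (use assms(1) in simp)

lemma abs_integral_le_if_abs_le:
  fixes F G :: "real \<Rightarrow> real"
  assumes "F \<in> borel_measurable borel" "integrable lborel G" "\<And>t. \<bar>F t\<bar> \<le> G t"
  shows "\<bar>\<integral>t. F t \<partial>lborel\<bar> \<le> (\<integral>t. G t \<partial>lborel)"
  by (rule integral_abs_bound_integral[OF integrable_if_abs_le[OF assms] assms(2)]) (use assms in auto)

lemma integrable_exp_neg_abs:
  assumes "0 < (a::real)"
  shows "integrable lborel (\<lambda>x. exp (- a * \<bar>x\<bar>))"
proof -
  have "(\<lambda>x. exp (- a * x)) absolutely_integrable_on {0..}"
    by (rule nonnegative_absolutely_integrable_1[OF integrable_on_exp_minus_to_infinity[OF assms]]) auto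
  then have pos: "integrable lborel (\<lambda>x. indicator {0..} x * exp (- a * x))"
    unfolding set_integrable_def by (subst (asm) integrable_completion) auto
  have neg: "integrable lborel (\<lambda>x. indicator {0..} (- x) * exp (- a * (- x)))"
    using lborel_integrable_real_affine[OF pos, of "-1" 0] by simp
  show ?thesis
    using Bochner_Integration.integrable_add[OF pos neg]
    by (rule Bochner_Integration.integrable_bound) (auto simp: indicator_def)
qed

lemma set_integrable_exp_neg_Ici: "set_integrable lborel {a..} (\<lambda>y. exp (- y :: real))"
proof -
  have "(\<lambda>x. exp (- x)) absolutely_integrable_on {a..}"
    by (rule nonnegative_absolutely_integrable_1[OF integrable_on_exp_minus_to_infinity[of 1 a, simplified]]) auto
  then show ?thesis
    unfolding set_integrable_def by (subst (asm) integrable_completion) auto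
qed

section \<open>The Japanese bracket\<close>

lemma jbr_ge_1: "jbr x \<ge> 1"
  unfolding jbr_def by simp

lemma jbr_pos: "jbr x > 0"
  using jbr_ge_1[of x] by linarith

lemma jbr_neq_0 [simp]: "jbr x \<noteq> 0"
  using jbr_pos[of x] by simp

lemma continuous_on_jbr [continuous_intros]: "continuous_on S jbr"
  unfolding jbr_def[abs_def] by (intro continuous_intros)

lemma borel_measurable_jbr [measurable]: "jbr \<in> borel_measurable borel"
  unfolding jbr_def[abs_def] by measurable

lemma jbr_powr_ge_1: "0 \<le> g \<Longrightarrow> jbr x powr g \<ge> 1"
  using jbr_ge_1 by (simp add: ge_one_powr_ge_zero)

lemma jbr_le_1_plus_abs: "jbr x \<le> 1 + \<bar>x\<bar>"
  unfolding jbr_def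
  by (rule real_le_lsqrt) (auto simp: power2_eq_square abs_mult_self_eq algebra_simps)

lemma jbr_le_sqrt_2_mult: "jbr x \<le> sqrt 2 * jbr (x - y) * jbr y"
proof -
  have "x\<^sup>2 \<le> 2 * (x - y)\<^sup>2 + 2 * y\<^sup>2"
    using zero_le_power2[of "x - 2 * y"] by (simp add: power2_eq_square algebra_simps)
  moreover have "0 \<le> y\<^sup>2 * (x - y)\<^sup>2" by simp
  moreover have "2 * ((1 + (x - y)\<^sup>2) * (1 + y\<^sup>2)) = 2 + 2 * (x - y)\<^sup>2 + 2 * y\<^sup>2 + 2 * (y\<^sup>2 * (x - y)\<^sup>2)"
    by (simp add: algebra_simps)
  ultimately have "1 + x\<^sup>2 \<le> 2 * ((1 + (x - y)\<^sup>2) * (1 + y\<^sup>2))"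
    by linarith
  then have "sqrt (1 + x\<^sup>2) \<le> sqrt (2 * ((1 + (x - y)\<^sup>2) * (1 + y\<^sup>2)))"
    by (rule real_sqrt_le_mono)
  then show ?thesis unfolding jbr_def by (simp add: real_sqrt_mult mult.assoc)
qed

lemma jbr_powr_peetre:
  assumes "0 \<le> g"
  shows "jbr x powr g \<le> 2 powr (g / 2) * jbr (x - y) powr g * jbr y powr g"
proof -
  have "jbr x powr g \<le> (sqrt 2 * jbr (x - y) * jbr y) powr g"
    using assms jbr_le_sqrt_2_mult less_imp_le[OF jbr_pos] by (intro powr_mono2) auto
  also have "\<dots> = sqrt 2 powr g * jbr (x - y) powr g * jbr y powr g"
    using jbr_pos by (simp add: powr_mult)
  also have "sqrt 2 powr g = 2 powr (g / 2)"
    by (simp add: sqrt_def root_powr_inverse powr_powr)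
  finally show ?thesis .
qed

lemma jbr_powr_le_exp:
  assumes "0 \<le> g" "0 < e"
  obtains c where "0 < c" "\<And>x. jbr x powr g \<le> c * exp (e * \<bar>x\<bar>)"
proof
  define m where "m = max 1 (g / e)"
  have m: "m \<ge> 1" "g / m \<le> e"
    using assms unfolding m_def by (auto simp: field_simps max_def)
  show "0 < m powr g" using m by simp
  fix x
  have "1 + \<bar>x\<bar> / m \<le> exp (\<bar>x\<bar> / m)" by (rule exp_ge_add_one_self)
  then have "1 + \<bar>x\<bar> \<le> m * exp (\<bar>x\<bar> / m)"
    using m by (simp add: field_simps)
  then have "jbr x powr g \<le> (m * exp (\<bar>x\<bar> / m)) powr g"
    using jbr_le_1_plus_abs[of x] less_imp_le[OF jbr_pos] assms by (intro powr_mono2) auto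
  also have "\<dots> = m powr g * exp (g / m * \<bar>x\<bar>)"
    using m by (simp add: powr_def ln_mult exp_add[symmetric] algebra_simps)
  also have "\<dots> \<le> m powr g * exp (e * \<bar>x\<bar>)"
  proof -
    have "g / m * \<bar>x\<bar> \<le> e * \<bar>x\<bar>" using m by (intro mult_right_mono) auto
    then show ?thesis by (intro mult_left_mono) auto
  qed
  finally show "jbr x powr g \<le> m powr g * exp (e * \<bar>x\<bar>)" .
qed

section \<open>Weighted kernels and the weighted Young inequality\<close>

abbreviation in_L2w :: "real \<Rightarrow> (real \<Rightarrow> real) \<Rightarrow> bool" where
  "in_L2w g f \<equiv> integrable lborel (\<lambda>x. (f x * jbr x powr g)\<^sup>2)"

abbreviation L2w_sq :: "real \<Rightarrow> (real \<Rightarrow> real) \<Rightarrow> real" where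
  "L2w_sq g f \<equiv> \<integral>x. (f x * jbr x powr g)\<^sup>2 \<partial>lborel"

lemma L2w_add_sq_le:
  fixes f h :: "real \<Rightarrow> real"
  assumes [measurable]: "f \<in> borel_measurable borel" "h \<in> borel_measurable borel"
    and f: "in_L2w g f" and h: "in_L2w g h"
  shows "in_L2w g (\<lambda>x. f x + h x)"
    and "L2w_sq g (\<lambda>x. f x + h x) \<le> 2 * L2w_sq g f + 2 * L2w_sq g h"
proof -
  have pt: "((f x + h x) * jbr x powr g)\<^sup>2 \<le> 2 * (f x * jbr x powr g)\<^sup>2 + 2 * (h x * jbr x powr g)\<^sup>2" for x
    using zero_le_power2[of "f x * jbr x powr g - h x * jbr x powr g"]
    by (simp add: power2_eq_square algebra_simps)
  have sum: "integrable lborel (\<lambda>x. 2 * (f x * jbr x powr g)\<^sup>2 + 2 * (h x * jbr x powr g)\<^sup>2)"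
    using f h by simp
  show i: "in_L2w g (\<lambda>x. f x + h x)"
    by (rule integrable_if_abs_le[OF _ sum]) (use pt in auto)
  have "L2w_sq g (\<lambda>x. f x + h x) \<le> (\<integral>x. 2 * (f x * jbr x powr g)\<^sup>2 + 2 * (h x * jbr x powr g)\<^sup>2 \<partial>lborel)"
    using i sum pt by (intro integral_mono) auto
  also have "\<dots> = 2 * L2w_sq g f + 2 * L2w_sq g h"
    using f h by simp
  finally show "L2w_sq g (\<lambda>x. f x + h x) \<le> 2 * L2w_sq g f + 2 * L2w_sq g h" .
qed

definition weighted_abs :: "real \<Rightarrow> (real \<Rightarrow> real) \<Rightarrow> real \<Rightarrow> real" where
  "weighted_abs g f z = \<bar>f z\<bar> * jbr z powr g"

lemma weighted_abs_nonneg: "0 \<le> weighted_abs g f z"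
  by (simp add: weighted_abs_def)

lemma borel_measurable_weighted_abs [measurable]:
  assumes [measurable]: "f \<in> borel_measurable borel"
  shows "weighted_abs g f \<in> borel_measurable borel"
  unfolding weighted_abs_def[abs_def] by measurable

lemma weighted_abs_sq: "(weighted_abs g f z)\<^sup>2 = (f z * jbr z powr g)\<^sup>2"
  by (simp add: weighted_abs_def power_mult_distrib)

definition weighted_kernel :: "real \<Rightarrow> (real \<Rightarrow> real) \<Rightarrow> bool" where
  "weighted_kernel g k \<longleftrightarrow> k \<in> borel_measurable borel \<and>
     integrable lborel (weighted_abs g k) \<and> (\<exists>\<alpha>. \<forall>z. weighted_abs g k z \<le> \<alpha>)"

definition young_const :: "real \<Rightarrow> (real \<Rightarrow> real) \<Rightarrow> real" where
  "young_const g k = 2 powr g * (\<integral>z. weighted_abs g k z \<partial>lborel)\<^sup>2"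

lemma young_const_nonneg: "0 \<le> young_const g k"
  by (simp add: young_const_def)

lemma weighted_kernel_if_exp_decay:
  assumes k: "k \<in> borel_measurable borel" and decay: "\<And>z. \<bar>k z\<bar> \<le> A * exp (- \<eta> * \<bar>z\<bar>)"
    and "0 < \<eta>" "0 \<le> g"
  shows "weighted_kernel g k"
proof -
  obtain c where c: "0 < c" "\<And>x. jbr x powr g \<le> c * exp (\<eta> / 2 * \<bar>x\<bar>)"
    using jbr_powr_le_exp[OF \<open>0 \<le> g\<close>, of "\<eta> / 2"] \<open>0 < \<eta>\<close> by auto
  have A: "0 \<le> A"
    using decay[of 0] abs_ge_zero[of "k 0"] by simp
  have bound: "\<bar>k z\<bar> * jbr z powr g \<le> A * c * exp (- (\<eta> / 2) * \<bar>z\<bar>)" for z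
  proof -
    have "\<bar>k z\<bar> * jbr z powr g \<le> A * exp (- \<eta> * \<bar>z\<bar>) * (c * exp (\<eta> / 2 * \<bar>z\<bar>))"
      using A by (intro mult_mono decay c) auto
    also have "\<dots> = A * c * exp (- (\<eta> / 2) * \<bar>z\<bar>)"
      by (simp add: mult_exp_exp algebra_simps)
    finally show ?thesis .
  qed
  have "integrable lborel (\<lambda>z. A * c * exp (- (\<eta> / 2) * \<bar>z\<bar>))"
    using integrable_exp_neg_abs[of "\<eta> / 2"] \<open>0 < \<eta>\<close> by simp
  then have "integrable lborel (\<lambda>z. \<bar>k z\<bar> * jbr z powr g)"
    by (rule integrable_if_abs_le[rotated]) (use k bound in auto)
  moreover have "\<bar>k z\<bar> * jbr z powr g \<le> A * c" for z
    using bound[of z] mult_left_mono[of "exp (- (\<eta> / 2) * \<bar>z\<bar>)" 1 "A * c"] A c \<open>0 < \<eta>\<close>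
    by auto
  ultimately show ?thesis using k unfolding weighted_kernel_def weighted_abs_def[abs_def] by blast
qed

lemma weighted_kernel_integrable:
  assumes "weighted_kernel g k" "0 \<le> g"
  shows "integrable lborel k"
proof -
  have "\<bar>k z\<bar> \<le> \<bar>k z\<bar> * jbr z powr g" for z
    using mult_left_mono[OF jbr_powr_ge_1[OF assms(2)], of "\<bar>k z\<bar>" z] by simp
  then show ?thesis
    using assms(1) unfolding weighted_kernel_def weighted_abs_def[abs_def]
    by (blast intro: integrable_if_abs_le)
qed

lemma sq_le_mult_if_AM_GM_bound:
  fixes T A S :: real
  assumes "0 \<le> T" "0 \<le> A" "0 \<le> S" and bound: "\<And>t. 0 < t \<Longrightarrow> T \<le> (t * A + S / t) / 2"
  shows "T\<^sup>2 \<le> A * S"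
proof (cases "T = 0")
  case False
  then have T: "T > 0" using assms by simp
  show ?thesis
  proof (cases "A = 0")
    case True
    have "T \<le> (S / ((S + 1) / (2 * T))) / 2"
      using bound[of "(S + 1) / (2 * T)"] True T assms by simp
    also have "\<dots> < T" using T assms by (simp add: field_simps)
    finally show ?thesis by simp
  next
    case False
    then have A: "A > 0" using assms by simp
    have "T \<le> (T / A * A + S / (T / A)) / 2" using bound[of "T / A"] T A by simp
    then have "T \<le> S * A / T" using T A by (simp add: field_simps)
    then show ?thesis using T by (simp add: field_simps power2_eq_square)
  qed
qed (use assms in simp)

context
  fixes a :: "real \<Rightarrow> real" and \<alpha> :: real
  assumes a_meas [measurable]: "a \<in> borel_measurable borel"
    and a_nonneg: "\<And>z. 0 \<le> a z" and a_le: "\<And>z. a z \<le> \<alpha>" and a_int: "integrable lborel a"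
begin

lemma integrable_conv_integrand:
  assumes [measurable]: "c \<in> borel_measurable borel" and "integrable lborel c"
  shows "integrable lborel (\<lambda>y. a (x - y) * c y)"
  by (rule integrable_if_abs_le[of _ "\<lambda>y. \<alpha> * \<bar>c y\<bar>"])
     (use assms a_nonneg a_le in \<open>auto simp: abs_mult intro: mult_right_mono\<close>)

lemma nn_integral_conv_nonneg:
  assumes [measurable]: "c \<in> borel_measurable borel"
    and c_nonneg: "\<And>y. 0 \<le> c y" and c_int: "integrable lborel c"
  shows "(\<integral>\<^sup>+x. ennreal (conv a c x) \<partial>lborel) = ennreal ((\<integral>z. a z \<partial>lborel) * (\<integral>y. c y \<partial>lborel))"
proof -
  have "(\<integral>\<^sup>+x. ennreal (conv a c x) \<partial>lborel)
      = (\<integral>\<^sup>+x. (\<integral>\<^sup>+y. ennreal (a (x - y) * c y) \<partial>lborel) \<partial>lborel)"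
    unfolding conv_def using integrable_conv_integrand[OF assms(1,3)] a_nonneg c_nonneg
    by (intro nn_integral_cong) (simp add: nn_integral_eq_integral)
  also have "\<dots> = (\<integral>\<^sup>+y. (\<integral>\<^sup>+x. ennreal (a (x - y) * c y) \<partial>lborel) \<partial>lborel)"
    by (rule lborel_pair.Fubini'[symmetric]) measurable
  also have "\<dots> = (\<integral>\<^sup>+y. ennreal (c y) * (\<integral>\<^sup>+x. ennreal (a x) \<partial>lborel) \<partial>lborel)"
  proof (rule nn_integral_cong)
    fix y
    have "(\<integral>\<^sup>+x. ennreal (a (x - y) * c y) \<partial>lborel) = (\<integral>\<^sup>+x. ennreal (c y) * ennreal (a (x - y)) \<partial>lborel)"
      using a_nonneg c_nonneg by (intro nn_integral_cong) (simp add: ennreal_mult' mult.commute)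
    also have "\<dots> = ennreal (c y) * (\<integral>\<^sup>+x. ennreal (a (x - y)) \<partial>lborel)"
      by (rule nn_integral_cmult) measurable
    also have "(\<integral>\<^sup>+x. ennreal (a (x - y)) \<partial>lborel) = (\<integral>\<^sup>+x. ennreal (a x) \<partial>lborel)"
      using nn_integral_real_affine[of "\<lambda>x. ennreal (a x)" 1 "- y"] by simp
    finally show "(\<integral>\<^sup>+x. ennreal (a (x - y) * c y) \<partial>lborel) = ennreal (c y) * (\<integral>\<^sup>+x. ennreal (a x) \<partial>lborel)" .
  qed
  also have "\<dots> = (\<integral>\<^sup>+y. ennreal (c y) \<partial>lborel) * (\<integral>\<^sup>+x. ennreal (a x) \<partial>lborel)"
    by (rule nn_integral_multc) measurable
  also have "\<dots> = ennreal ((\<integral>z. a z \<partial>lborel) * (\<integral>y. c y \<partial>lborel))"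
    using a_int c_int a_nonneg c_nonneg
    by (simp add: nn_integral_eq_integral ennreal_mult' mult.commute)
  finally show ?thesis .
qed

lemma integral_conv_nonneg:
  assumes [measurable]: "c \<in> borel_measurable borel"
    and c_nonneg: "\<And>y. 0 \<le> c y" and c_int: "integrable lborel c"
  shows "integrable lborel (conv a c)"
    and "(\<integral>x. conv a c x \<partial>lborel) = (\<integral>z. a z \<partial>lborel) * (\<integral>y. c y \<partial>lborel)"
proof -
  note nn = nn_integral_conv_nonneg[OF assms]
  have conv_nonneg: "0 \<le> conv a c x" for x
    unfolding conv_def using a_nonneg c_nonneg by simp
  have [measurable]: "conv a c \<in> borel_measurable borel"
    unfolding conv_def[abs_def] by measurable
  show int: "integrable lborel (conv a c)"
    by (rule integrableI_nn_integral_finite[OF _ _ nn]) (auto simp: conv_nonneg)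
  show "(\<integral>x. conv a c x \<partial>lborel) = (\<integral>z. a z \<partial>lborel) * (\<integral>y. c y \<partial>lborel)"
    using nn int conv_nonneg a_nonneg c_nonneg
    by (subst integral_eq_nn_integral) auto
qed

text \<open>Cauchy--Schwarz for the measure \<open>a (x - y) dy\<close>, obtained by optimising the AM--GM bound
  \<open>b \<le> (t + b\<^sup>2 / t) / 2\<close> over \<open>t\<close>.\<close>

lemma conv_sq_le:
  assumes [measurable]: "b \<in> borel_measurable borel"
    and b_nonneg: "\<And>y. 0 \<le> b y" and b_sq: "integrable lborel (\<lambda>y. (b y)\<^sup>2)"
  shows "integrable lborel (\<lambda>y. a (x - y) * b y)"
    and "(conv a b x)\<^sup>2 \<le> (\<integral>z. a z \<partial>lborel) * conv a (\<lambda>y. (b y)\<^sup>2) x"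
proof -
  have shifted: "integrable lborel (\<lambda>y. a (x - y))"
    using lborel_integrable_real_affine[OF a_int, of "-1" x] by simp
  have shifted_integral: "(\<integral>y. a (x - y) \<partial>lborel) = (\<integral>z. a z \<partial>lborel)"
    using lborel_integral_real_affine[of "-1" a x] by simp
  have sq: "integrable lborel (\<lambda>y. a (x - y) * (b y)\<^sup>2)"
    by (rule integrable_conv_integrand[OF _ b_sq]) measurable
  have am_gm: "b y \<le> (t + (b y)\<^sup>2 / t) / 2" if "0 < t" for t y
    using that zero_le_power2[of "b y - t"] by (simp add: power2_eq_square field_simps)
  show int: "integrable lborel (\<lambda>y. a (x - y) * b y)"
  proof (rule integrable_if_abs_le[of _ "\<lambda>y. a (x - y) + a (x - y) * (b y)\<^sup>2"])
    show "\<bar>a (x - y) * b y\<bar> \<le> a (x - y) + a (x - y) * (b y)\<^sup>2" for y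
    proof -
      have "a (x - y) * b y \<le> a (x - y) * ((1 + (b y)\<^sup>2) / 2)"
        using mult_left_mono[OF am_gm[of 1 y] a_nonneg[of "x - y"]] by simp
      then show ?thesis
        using mult_nonneg_nonneg[OF a_nonneg[of "x - y"] b_nonneg[of y]] a_nonneg[of "x - y"]
          zero_le_power2[of "b y"] mult_nonneg_nonneg[OF a_nonneg[of "x - y"] zero_le_power2[of "b y"]]
        by (simp add: algebra_simps)
    qed
  qed (use shifted sq in auto)
  show "(conv a b x)\<^sup>2 \<le> (\<integral>z. a z \<partial>lborel) * conv a (\<lambda>y. (b y)\<^sup>2) x"
  proof (rule sq_le_mult_if_AM_GM_bound)
    fix t :: real assume "0 < t"
    have "conv a b x \<le> (\<integral>y. (t * a (x - y) + a (x - y) * (b y)\<^sup>2 / t) / 2 \<partial>lborel)"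
      unfolding conv_def
    proof (rule integral_mono[OF int])
      show "a (x - y) * b y \<le> (t * a (x - y) + a (x - y) * (b y)\<^sup>2 / t) / 2" for y
        using mult_left_mono[OF am_gm[OF \<open>0 < t\<close>, of y] a_nonneg[of "x - y"]]
        by (simp add: algebra_simps)
    qed (use shifted sq in auto)
    also have "\<dots> = (t * (\<integral>z. a z \<partial>lborel) + conv a (\<lambda>y. (b y)\<^sup>2) x / t) / 2"
      using shifted sq by (simp add: shifted_integral conv_def)
    finally show "conv a b x \<le> (t * (\<integral>z. a z \<partial>lborel) + conv a (\<lambda>y. (b y)\<^sup>2) x / t) / 2" .
  qed (use a_nonneg b_nonneg in \<open>auto simp: conv_def\<close>)
qed

end

lemma weighted_kernelE:
  assumes "weighted_kernel g k"
  obtains \<alpha> where "k \<in> borel_measurable borel" "\<And>z. weighted_abs g k z \<le> \<alpha>"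
    "integrable lborel (weighted_abs g k)"
  using assms unfolding weighted_kernel_def by blast

lemma abs_conv_weighted_le:
  assumes k: "weighted_kernel g k" and "0 \<le> g"
    and [measurable]: "w \<in> borel_measurable borel" and w: "in_L2w g w"
  shows "\<bar>conv k w x\<bar> * jbr x powr g \<le> 2 powr (g / 2) * conv (weighted_abs g k) (weighted_abs g w) x"
proof -
  obtain \<alpha> where [measurable]: "k \<in> borel_measurable borel"
    and bounded: "\<And>z. weighted_abs g k z \<le> \<alpha>" and int: "integrable lborel (weighted_abs g k)"
    using weighted_kernelE[OF k] by blast
  have "\<bar>conv k w x\<bar> * jbr x powr g = \<bar>\<integral>y. k (x - y) * w y * jbr x powr g \<partial>lborel\<bar>"
    unfolding conv_def by (simp add: abs_mult)
  also have "\<dots> \<le> (\<integral>y. 2 powr (g / 2) * (weighted_abs g k (x - y) * weighted_abs g w y) \<partial>lborel)"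
  proof (rule abs_integral_le_if_abs_le)
    show "integrable lborel (\<lambda>y. 2 powr (g / 2) * (weighted_abs g k (x - y) * weighted_abs g w y))"
      using conv_sq_le(1)[OF _ weighted_abs_nonneg bounded int _ weighted_abs_nonneg] w
      by (simp add: weighted_abs_sq)
    show "\<bar>k (x - y) * w y * jbr x powr g\<bar> \<le> 2 powr (g / 2) * (weighted_abs g k (x - y) * weighted_abs g w y)" for y
      using mult_left_mono[OF jbr_powr_peetre[OF \<open>0 \<le> g\<close>, of x y], of "\<bar>k (x - y)\<bar> * \<bar>w y\<bar>"]
      by (simp add: weighted_abs_def abs_mult algebra_simps)
  qed auto
  finally show ?thesis by (simp add: conv_def)
qed

lemma weighted_young:
  assumes k: "weighted_kernel g k" and "0 \<le> g"
    and [measurable]: "w \<in> borel_measurable borel" and w: "in_L2w g w"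
  shows "in_L2w g (conv k w)" and "L2w_sq g (conv k w) \<le> young_const g k * L2w_sq g w"
proof -
  obtain \<alpha> where [measurable]: "k \<in> borel_measurable borel"
    and bounded: "\<And>z. weighted_abs g k z \<le> \<alpha>" and int: "integrable lborel (weighted_abs g k)"
    using weighted_kernelE[OF k] by blast
  define b where "b = weighted_abs g w"
  have b_sq_int: "integrable lborel (\<lambda>y. (b y)\<^sup>2)" using w by (simp add: b_def weighted_abs_sq)
  note fubini = integral_conv_nonneg[OF _ weighted_abs_nonneg bounded int _ _ b_sq_int]
  define A where "A = (\<integral>z. weighted_abs g k z \<partial>lborel)"
  have pointwise: "(conv k w x * jbr x powr g)\<^sup>2 \<le> 2 powr g * A * conv (weighted_abs g k) (\<lambda>y. (b y)\<^sup>2) x" for x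
  proof -
    have "(conv k w x * jbr x powr g)\<^sup>2 = (\<bar>conv k w x\<bar> * jbr x powr g)\<^sup>2"
      by (simp add: power_mult_distrib)
    also have "\<dots> \<le> (2 powr (g / 2) * conv (weighted_abs g k) b x)\<^sup>2"
      using abs_conv_weighted_le[OF k \<open>0 \<le> g\<close> _ w, of x] by (intro power_mono) (auto simp: b_def)
    also have "\<dots> = 2 powr g * (conv (weighted_abs g k) b x)\<^sup>2"
      by (simp add: power_mult_distrib power2_eq_square flip: powr_add)
    also have "\<dots> \<le> 2 powr g * A * conv (weighted_abs g k) (\<lambda>y. (b y)\<^sup>2) x"
      using conv_sq_le(2)[OF _ weighted_abs_nonneg bounded int _ _ b_sq_int, of x]
      by (simp add: A_def b_def weighted_abs_nonneg)
    finally show ?thesis .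
  qed
  have dom: "integrable lborel (\<lambda>x. 2 powr g * A * conv (weighted_abs g k) (\<lambda>y. (b y)\<^sup>2) x)"
    using fubini(1) by (simp add: b_def weighted_abs_nonneg)
  show int: "in_L2w g (conv k w)"
    by (rule integrable_if_abs_le[OF _ dom]) (use pointwise in \<open>auto simp: conv_def[abs_def]\<close>)
  have "L2w_sq g (conv k w) \<le> (\<integral>x. 2 powr g * A * conv (weighted_abs g k) (\<lambda>y. (b y)\<^sup>2) x \<partial>lborel)"
    using int dom pointwise by (intro integral_mono) auto
  also have "\<dots> = young_const g k * L2w_sq g w"
    using fubini(2) unfolding b_def weighted_abs_sq by (simp add: young_const_def A_def power2_eq_square)
  finally show "L2w_sq g (conv k w) \<le> young_const g k * L2w_sq g w" .
qed

section \<open>Convolution and differentiation\<close>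

lemma conv_eq_integral_translate: "conv k w x = (\<integral>z. k z * w (x - z) \<partial>lborel)"
  unfolding conv_def using lborel_integral_real_affine[of "-1" "\<lambda>y. k (x - y) * w y" x] by simp

lemma DERIV_integral_translate:
  fixes k w w' G :: "real \<Rightarrow> real"
  assumes [measurable]: "k \<in> borel_measurable borel" "w' \<in> borel_measurable borel"
    and w: "\<And>x. (w has_real_derivative w' x) (at x)"
    and int: "\<And>z. integrable lborel (\<lambda>y. k y * w (z - y))"
    and G: "integrable lborel G"
    and dom: "\<And>z y. z \<noteq> x \<Longrightarrow> \<bar>z - x\<bar> \<le> 1 \<Longrightarrow> \<bar>k y * ((w (z - y) - w (x - y)) / (z - x))\<bar> \<le> G y"
  shows "((\<lambda>z. \<integral>y. k y * w (z - y) \<partial>lborel) has_real_derivative (\<integral>y. k y * w' (x - y) \<partial>lborel)) (at x)"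
  unfolding has_field_derivative_iff tendsto_at_iff_sequentially
proof (intro allI impI)
  have [measurable]: "w \<in> borel_measurable borel"
    using w by (intro borel_measurable_continuous_onI continuous_at_imp_continuous_on ballI DERIV_isCont) auto
  fix X :: "nat \<Rightarrow> real"
  assume X: "\<forall>i. X i \<in> UNIV - {x}" and lim: "X \<longlonglongrightarrow> x"
  obtain N where "\<forall>i\<ge>N. norm (X i - x) < 1"
    using lim[unfolded LIMSEQ_iff, rule_format, of 1] by auto
  then have N: "\<And>i. N \<le> i \<Longrightarrow> \<bar>X i - x\<bar> \<le> 1" by fastforce
  define s where "s i y = k y * ((w (X (i + N) - y) - w (x - y)) / (X (i + N) - x))" for i y
  have quotient: "((\<lambda>z. ((\<integral>y. k y * w (z - y) \<partial>lborel) - (\<integral>y. k y * w (x - y) \<partial>lborel)) / (z - x)) \<circ> X) (i + N)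
      = (\<integral>y. s i y \<partial>lborel)" for i
    using int by (simp add: s_def right_diff_distrib diff_divide_distrib)
  have "(\<lambda>i. \<integral>y. s i y \<partial>lborel) \<longlonglongrightarrow> (\<integral>y. k y * w' (x - y) \<partial>lborel)"
  proof (rule integral_dominated_convergence[where w=G])
    show "AE y in lborel. (\<lambda>i. s i y) \<longlonglongrightarrow> k y * w' (x - y)"
    proof (intro AE_I2)
      fix y
      have "(\<lambda>i. X (i + N) - y) \<longlonglongrightarrow> x - y"
        using LIMSEQ_ignore_initial_segment[OF lim, of N] by (intro tendsto_intros)
      moreover have "((\<lambda>z. (w z - w (x - y)) / (z - (x - y))) \<longlongrightarrow> w' (x - y)) (at (x - y))"
        using w[of "x - y"] unfolding has_field_derivative_iff .
      ultimately have "((\<lambda>z. (w z - w (x - y)) / (z - (x - y))) \<circ> (\<lambda>i. X (i + N) - y)) \<longlonglongrightarrow> w' (x - y)"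
        using X by (auto simp: tendsto_at_iff_sequentially)
      then show "(\<lambda>i. s i y) \<longlonglongrightarrow> k y * w' (x - y)"
        unfolding s_def by (intro tendsto_intros) (simp add: o_def)
    qed
    show "AE y in lborel. norm (s i y) \<le> G y" for i
      using X N[of "i + N"] dom[of "X (i + N)"] by (intro AE_I2) (simp add: s_def)
  qed (use G in \<open>auto simp: s_def\<close>)
  then have "(\<lambda>i. ((\<lambda>z. ((\<integral>y. k y * w (z - y) \<partial>lborel) - (\<integral>y. k y * w (x - y) \<partial>lborel)) / (z - x)) \<circ> X) (i + N))
      \<longlonglongrightarrow> (\<integral>y. k y * w' (x - y) \<partial>lborel)"
    by (simp only: quotient)
  then show "((\<lambda>z. ((\<integral>y. k y * w (z - y) \<partial>lborel) - (\<integral>y. k y * w (x - y) \<partial>lborel)) / (z - x)) \<circ> X)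
      \<longlonglongrightarrow> (\<integral>y. k y * w' (x - y) \<partial>lborel)"
    by (rule LIMSEQ_offset)
qed

lemma difference_quotient_le:
  fixes w w' :: "real \<Rightarrow> real"
  assumes "\<And>x. (w has_real_derivative w' x) (at x)" "\<And>x. \<bar>w' x\<bar> \<le> M" "z \<noteq> x"
  shows "\<bar>(w (z - y) - w (x - y)) / (z - x)\<bar> \<le> M"
  using field_differentiable_bound[of UNIV w w' M "z - y" "x - y"] assms
  by (simp add: abs_divide divide_le_eq has_field_derivative_at_within)

lemma integrable_conv_integrand_bounded:
  fixes k w :: "real \<Rightarrow> real"
  assumes [measurable]: "k \<in> borel_measurable borel" "w \<in> borel_measurable borel"
    and "integrable lborel k" "\<And>x. \<bar>w x\<bar> \<le> B"
  shows "integrable lborel (\<lambda>y. k y * w (x - y))"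
  by (rule integrable_if_abs_le[of _ "\<lambda>y. \<bar>k y\<bar> * B"])
     (use assms in \<open>auto simp: abs_mult intro: mult_left_mono\<close>)

lemma abs_conv_le:
  fixes k w :: "real \<Rightarrow> real"
  assumes [measurable]: "k \<in> borel_measurable borel" "w \<in> borel_measurable borel"
    and "integrable lborel k" "\<And>x. \<bar>w x\<bar> \<le> B"
  shows "\<bar>conv k w x\<bar> \<le> (\<integral>z. \<bar>k z\<bar> \<partial>lborel) * B"
proof -
  have "\<bar>conv k w x\<bar> \<le> (\<integral>z. \<bar>k z\<bar> * B \<partial>lborel)"
    unfolding conv_eq_integral_translate
    by (rule abs_integral_le_if_abs_le) (use assms in \<open>auto simp: abs_mult intro: mult_left_mono\<close>)
  then show ?thesis by simp
qed

lemma DERIV_conv: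
  fixes k w w' :: "real \<Rightarrow> real"
  assumes [measurable]: "k \<in> borel_measurable borel" "w' \<in> borel_measurable borel"
    and k: "integrable lborel k"
    and w: "\<And>x. (w has_real_derivative w' x) (at x)" "\<And>x. \<bar>w x\<bar> \<le> B" "\<And>x. \<bar>w' x\<bar> \<le> M"
  shows "(conv k w has_real_derivative conv k w' x) (at x)"
proof -
  have [measurable]: "w \<in> borel_measurable borel"
    using w(1) by (intro borel_measurable_continuous_onI continuous_at_imp_continuous_on ballI DERIV_isCont) auto
  show ?thesis
    unfolding conv_eq_integral_translate[abs_def]
  proof (rule DERIV_integral_translate[where G = "\<lambda>y. \<bar>k y\<bar> * M"])
    show "\<bar>k y * ((w (z - y) - w (x - y)) / (z - x))\<bar> \<le> \<bar>k y\<bar> * M" if "z \<noteq> x" for z y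
      using mult_left_mono[OF difference_quotient_le[OF w(1,3) that, of y] abs_ge_zero[of "k y"]]
      by (simp add: abs_mult)
  qed (use k w in \<open>auto intro: integrable_conv_integrand_bounded[where B = B]\<close>)
qed

lemma DERIV_conv_compact_support:
  fixes k w w' :: "real \<Rightarrow> real"
  assumes [measurable]: "k \<in> borel_measurable borel" "w' \<in> borel_measurable borel"
    and k: "\<And>z. \<bar>k z\<bar> \<le> K"
    and w: "\<And>x. (w has_real_derivative w' x) (at x)" "\<And>x. \<bar>w x\<bar> \<le> B" "\<And>x. \<bar>w' x\<bar> \<le> M"
    and supp: "\<And>x. R < \<bar>x\<bar> \<Longrightarrow> w x = 0"
  shows "(conv k w has_real_derivative conv k w' x) (at x)"
proof -
  have [measurable]: "w \<in> borel_measurable borel"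
    using w(1) by (intro borel_measurable_continuous_onI continuous_at_imp_continuous_on ballI DERIV_isCont) auto
  have ind: "integrable lborel (\<lambda>y. c * indicator {a..b} y :: real)" for a b c :: real
    by (simp add: emeasure_lborel_Icc_eq integrable_real_indicator)
  have "0 \<le> K" "0 \<le> M" using k[of 0] w(3)[of 0] by linarith+
  show ?thesis
    unfolding conv_eq_integral_translate[abs_def]
  proof (rule DERIV_integral_translate[where G = "\<lambda>y. K * M * indicator {x - (R + 1)..x + (R + 1)} y"])
    show "integrable lborel (\<lambda>y. k y * w (z - y))" for z
    proof (rule integrable_if_abs_le[of _ "\<lambda>y. K * B * indicator {z - R..z + R} y"])
      show "\<bar>k y * w (z - y)\<bar> \<le> K * B * indicator {z - R..z + R} y" for y
        using supp[of "z - y"] k[of y] w(2)[of "z - y"] \<open>0 \<le> K\<close>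
        by (cases "R < \<bar>z - y\<bar>") (auto simp: abs_mult indicator_def intro: mult_mono)
    qed (use ind in auto)
    show "\<bar>k y * ((w (z - y) - w (x - y)) / (z - x))\<bar> \<le> K * M * indicator {x - (R + 1)..x + (R + 1)} y"
      if "z \<noteq> x" "\<bar>z - x\<bar> \<le> 1" for z y
    proof (cases "y \<in> {x - (R + 1)..x + (R + 1)}")
      case True
      then show ?thesis
        using mult_mono[OF k difference_quotient_le[OF w(1,3) that(1)]] \<open>0 \<le> K\<close>
        by (simp add: abs_mult)
    next
      case False
      then have "R < \<bar>z - y\<bar>" "R < \<bar>x - y\<bar>" using that(2) by auto
      then show ?thesis using False by (simp add: supp)
    qed
  qed (use ind w in auto)
qed

lemma conv_diff_kernel:
  fixes k1 k2 w :: "real \<Rightarrow> real"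
  assumes [measurable]: "k1 \<in> borel_measurable borel" "k2 \<in> borel_measurable borel" "w \<in> borel_measurable borel"
    and "\<And>z. \<bar>k1 z\<bar> \<le> B1" "\<And>z. \<bar>k2 z\<bar> \<le> B2" "integrable lborel w"
  shows "conv (\<lambda>z. k1 z - k2 z) w x = conv k1 w x - conv k2 w x"
proof -
  have int: "integrable lborel (\<lambda>y. k (x - y) * w y)" if [measurable]: "k \<in> borel_measurable borel"
    and "\<And>z. \<bar>k z\<bar> \<le> B" for k B
    using integrable_conv_integrand_bounded[where k = w and w = k and B = B and x = x] assms that
    by (simp add: mult.commute)
  show ?thesis
    unfolding conv_def left_diff_distrib
    by (intro Bochner_Integration.integral_diff int[OF assms(1,4)] int[OF assms(2,5)])
qed

lemma conv_diff:
  fixes k w1 w2 :: "real \<Rightarrow> real"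
  assumes [measurable]: "k \<in> borel_measurable borel" "w1 \<in> borel_measurable borel" "w2 \<in> borel_measurable borel"
    and "integrable lborel k" "\<And>x. \<bar>w1 x\<bar> \<le> B1" "\<And>x. \<bar>w2 x\<bar> \<le> B2"
  shows "conv k (\<lambda>y. w1 y - w2 y) x = conv k w1 x - conv k w2 x"
  unfolding conv_eq_integral_translate
  using integrable_conv_integrand_bounded[where w = w1 and B = B1 and x = x]
    integrable_conv_integrand_bounded[where w = w2 and B = B2 and x = x] assms
  by (simp add: right_diff_distrib)

section \<open>The resolvent \<open>(1 - \<partial>)\<^sup>-\<^sup>1\<close>\<close>

lemma DERIV_tail_integral:
  fixes h :: "real \<Rightarrow> real"
  assumes h: "continuous_on UNIV h" and tails: "\<And>a. set_integrable lborel {a..} h"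
  shows "((\<lambda>x. \<integral>y. indicator {x..} y * h y \<partial>lborel) has_real_derivative - h x) (at x)"
proof -
  define T where "T u = (LINT y:{u..}|lborel. h y)" for u
  have "((\<lambda>u. LBINT y=x - 1..u. h y) has_vector_derivative h x) (at x within {x - 1..x + 1})"
    by (intro interval_integral_FTC2 continuous_on_subset[OF h]) auto
  then have "((\<lambda>u. LBINT y=x - 1..u. h y) has_real_derivative h x) (at x)"
    by (simp add: at_within_Icc_at has_real_derivative_iff_has_vector_derivative)
  then have "((\<lambda>u. T (x - 1) - (LBINT y=x - 1..u. h y)) has_real_derivative - h x) (at x)"
    using DERIV_diff[OF DERIV_const[of "T (x - 1)"]] by simp
  then have "(T has_real_derivative - h x) (at x)"
  proof (rule has_field_derivative_transform_within_open[of _ _ _ "{x - 1<..}"])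
    fix u :: real assume u: "u \<in> {x - 1<..}"
    have "{x - 1..} = {x - 1..u} \<union> {u..}" using u by auto
    then have "T (x - 1) = (LINT y:{x - 1..u} \<union> {u..}|lborel. h y)"
      by (simp add: T_def)
    also have "\<dots> = (LINT y:{x - 1..u}|lborel. h y) + (LINT y:{u..}|lborel. h y)"
    proof (rule set_integral_Un_AE)
      show "AE y in lborel. \<not> (y \<in> {x - 1..u} \<and> y \<in> {u..})"
        using AE_lborel_singleton[of u] by eventually_elim auto
      show "set_integrable lborel {x - 1..u} h"
        by (rule set_integrable_subset[OF tails[of "x - 1"]]) auto
    qed (use tails in auto)
    finally show "T (x - 1) - (LBINT y=x - 1..u. h y) = T u"
      using u by (simp add: T_def interval_integral_Icc)
  qed auto
  moreover have "(\<lambda>x. \<integral>y. indicator {x..} y * h y \<partial>lborel) = T"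
    by (rule ext) (simp add: T_def set_lebesgue_integral_def)
  ultimately show ?thesis by simp
qed

definition resolv_kernel :: "real \<Rightarrow> real" where
  "resolv_kernel z = indicator {..0} z * exp z"

lemma borel_measurable_resolv_kernel [measurable]: "resolv_kernel \<in> borel_measurable borel"
  unfolding resolv_kernel_def[abs_def] by measurable

lemma weighted_kernel_resolv_kernel: "0 \<le> g \<Longrightarrow> weighted_kernel g resolv_kernel"
  by (rule weighted_kernel_if_exp_decay[where A = 1 and \<eta> = 1]) (auto simp: resolv_kernel_def indicator_def)

lemma resolv_eq_conv: "resolv w = conv resolv_kernel w"
  unfolding resolv_def conv_def resolv_kernel_def
  by (intro ext Bochner_Integration.integral_cong) (auto simp: indicator_def)

lemma DERIV_resolv:
  assumes w: "continuous_on UNIV w" and w_le: "\<And>x. \<bar>w x\<bar> \<le> B"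
  shows "(resolv w has_real_derivative resolv w x - w x) (at x)"
proof -
  define h where "h y = exp (- y) * w y" for y
  have [measurable]: "w \<in> borel_measurable borel" by (rule borel_measurable_continuous_onI[OF w])
  have tails: "set_integrable lborel {a..} h" for a
    unfolding set_integrable_def
  proof (rule integrable_if_abs_le[of _ "\<lambda>y. B * (indicator {a..} y *\<^sub>R exp (- y))"])
    show "\<bar>indicator {a..} y *\<^sub>R h y\<bar> \<le> B * (indicator {a..} y *\<^sub>R exp (- y))" for y
      using mult_right_mono[OF w_le[of y], of "exp (- y)"]
      by (auto simp: h_def indicator_def abs_mult mult.commute)
  qed (use set_integrable_exp_neg_Ici[of a] in \<open>auto simp: set_integrable_def h_def\<close>)
  have eq: "resolv w = (\<lambda>x. exp x * (\<integral>y. indicator {x..} y * h y \<partial>lborel))"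
    unfolding resolv_def h_def
    by (rule ext, subst integral_mult_right_zero[symmetric])
       (intro Bochner_Integration.integral_cong, auto simp: exp_diff exp_minus field_simps)
  have "((\<lambda>x. exp x * (\<integral>y. indicator {x..} y * h y \<partial>lborel)) has_real_derivative
      exp x * (\<integral>y. indicator {x..} y * h y \<partial>lborel) + exp x * (- h x)) (at x)"
    by (rule derivative_eq_intros DERIV_tail_integral[OF _ tails] | simp add: h_def continuous_intros w)+
  then show ?thesis
    by (simp add: eq h_def exp_minus field_simps)
qed

lemma bounded_solution_of_ode_eq:
  fixes f h f' h' :: "real \<Rightarrow> real"
  assumes f: "\<And>x. (f has_real_derivative f' x) (at x)" "\<And>x. \<bar>f x\<bar> \<le> Bf"
    and h: "\<And>x. (h has_real_derivative h' x) (at x)" "\<And>x. \<bar>h x\<bar> \<le> Bh"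
    and same: "\<And>x. f x - f' x = h x - h' x"
  shows "f = h"
proof -
  define c where "c = (f 0 - h 0) * exp (- 0)"
  have "((\<lambda>x. (f x - h x) * exp (- x)) has_real_derivative 0) (at x)" for x
    by (rule derivative_eq_intros f h | simp)+ (use same[of x] in \<open>simp add: algebra_simps\<close>)
  then have const: "f x - h x = c * exp x" for x
    using DERIV_isconst_all[of "\<lambda>x. (f x - h x) * exp (- x)" x 0]
    by (simp add: c_def exp_minus field_simps)
  have "c = 0"
  proof (rule ccontr)
    assume "c \<noteq> 0"
    define x where "x = ln ((Bf + Bh + 1) / \<bar>c\<bar>)"
    have "0 \<le> Bf" "0 \<le> Bh" using f(2)[of 0] h(2)[of 0] by linarith+
    then have "\<bar>f x - h x\<bar> = Bf + Bh + 1"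
      using \<open>c \<noteq> 0\<close> by (simp add: const x_def abs_mult)
    then show False using f(2)[of x] h(2)[of x] by linarith
  qed
  then show ?thesis using const by (intro ext) (simp add: algebra_simps)
qed

lemma resolv_eq_if_DERIV:
  fixes f f' :: "real \<Rightarrow> real"
  assumes f: "\<And>x. (f has_real_derivative f' x) (at x)" "\<And>x. \<bar>f x\<bar> \<le> Bf"
    and w: "continuous_on UNIV (\<lambda>x. f x - f' x)" "\<And>x. \<bar>f x - f' x\<bar> \<le> Bw"
  shows "resolv (\<lambda>x. f x - f' x) = f"
proof (rule bounded_solution_of_ode_eq[OF DERIV_resolv[OF w] _ f])
  have [measurable]: "(\<lambda>x. f x - f' x) \<in> borel_measurable borel"
    by (rule borel_measurable_continuous_onI[OF w(1)])
  show "\<bar>resolv (\<lambda>x. f x - f' x) x\<bar> \<le> (\<integral>z. \<bar>resolv_kernel z\<bar> \<partial>lborel) * Bw" for x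
    unfolding resolv_eq_conv
    by (rule abs_conv_le[OF _ _ weighted_kernel_integrable[OF weighted_kernel_resolv_kernel] w(2)]) auto
qed auto

lemma Dop_eq:
  assumes "continuous_on UNIV w" "\<And>x. \<bar>w x\<bar> \<le> B"
  shows "Dop w = (\<lambda>x. resolv w x - w x)"
  unfolding Dop_def using DERIV_resolv[OF assms] by (intro ext DERIV_imp_deriv)

section \<open>Test functions\<close>

lemma bounded_if_compact_support:
  fixes f :: "real \<Rightarrow> real"
  assumes f: "continuous_on UNIV f" and supp: "\<And>x. R < \<bar>x\<bar> \<Longrightarrow> f x = 0"
  obtains B where "\<And>x. \<bar>f x\<bar> \<le> B"
proof -
  have "compact (f ` {-R..R})" by (intro compact_continuous_image continuous_on_subset[OF f]) auto
  then obtain a where a: "\<And>y. y \<in> f ` {-R..R} \<Longrightarrow> norm y \<le> a"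
    using compact_imp_bounded bounded_iff by metis
  have "\<bar>f x\<bar> \<le> max a 0" for x
    using a[of "f x"] supp[of x] by (cases "\<bar>x\<bar> \<le> R") (auto simp: abs_le_iff)
  then show ?thesis using that by blast
qed

lemma integrable_if_compact_support:
  fixes f :: "real \<Rightarrow> real"
  assumes f: "continuous_on UNIV f" and supp: "\<And>x. R < \<bar>x\<bar> \<Longrightarrow> f x = 0"
  shows "integrable lborel f"
proof -
  have "set_integrable lborel {-R..R} f"
    by (rule borel_integrable_atLeastAtMost'[OF continuous_on_subset[OF f]]) auto
  moreover have "(\<lambda>x. indicator {-R..R} x *\<^sub>R f x) = f"
  proof
    fix x show "indicator {-R..R} x *\<^sub>R f x = f x"
      using supp[of x] by (cases "\<bar>x\<bar> \<le> R") (auto simp: indicator_def abs_le_iff)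
  qed
  ultimately show ?thesis by (simp add: set_integrable_def)
qed

lemma DERIV_eq_0_outside_support:
  fixes f f' :: "real \<Rightarrow> real"
  assumes f: "\<And>x. (f has_real_derivative f' x) (at x)" and supp: "\<And>x. R < \<bar>x\<bar> \<Longrightarrow> f x = 0"
    and "R < \<bar>x\<bar>"
  shows "f' x = 0"
proof -
  have "open {x. R < \<bar>x\<bar>}" by (rule open_Collect_less) (intro continuous_intros)+
  then have "((\<lambda>_. 0) has_real_derivative f' x) (at x)"
    by (rule has_field_derivative_transform_within_open[OF f]) (use supp \<open>R < \<bar>x\<bar>\<close> in auto)
  then show ?thesis using DERIV_const DERIV_unique by blast
qed

context
  fixes u :: "real \<Rightarrow> real"
  assumes u: "test_fun u"
begin

lemma test_fun_DERIV: "(u has_real_derivative deriv u x) (at x)"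
  using u unfolding test_fun_def
  by (metis DERIV_deriv_iff_real_differentiable funpow_0)

lemma test_fun_continuous: "continuous_on UNIV u"
  using test_fun_DERIV by (intro continuous_at_imp_continuous_on ballI DERIV_isCont) auto

lemma borel_measurable_test_fun [measurable]: "u \<in> borel_measurable borel"
  by (rule borel_measurable_continuous_onI[OF test_fun_continuous])

lemma test_fun_support:
  obtains R where "\<And>x. R < \<bar>x\<bar> \<Longrightarrow> u x = 0"
  using u unfolding test_fun_def by blast

lemma test_fun_bounded:
  obtains B where "\<And>x. \<bar>u x\<bar> \<le> B"
proof -
  obtain R where "\<And>x. R < \<bar>x\<bar> \<Longrightarrow> u x = 0" using test_fun_support by blast
  then show ?thesis using bounded_if_compact_support[OF test_fun_continuous] that by blast
qed

lemma test_fun_integrable: "integrable lborel u"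
proof -
  obtain R where "\<And>x. R < \<bar>x\<bar> \<Longrightarrow> u x = 0" using test_fun_support by blast
  then show ?thesis by (rule integrable_if_compact_support[OF test_fun_continuous])
qed

lemma test_fun_in_L2w: "in_L2w g u"
proof -
  obtain R where "\<And>x. R < \<bar>x\<bar> \<Longrightarrow> u x = 0" using test_fun_support by blast
  then show ?thesis
    by (intro integrable_if_compact_support[of _ R]) (auto intro!: continuous_intros test_fun_continuous)
qed

lemma test_fun_deriv: "test_fun (deriv u)"
  unfolding test_fun_def
proof
  obtain R where "\<And>x. R < \<bar>x\<bar> \<Longrightarrow> u x = 0" using test_fun_support by blast
  then show "\<exists>R. \<forall>x. R < \<bar>x\<bar> \<longrightarrow> deriv u x = 0"
    using DERIV_eq_0_outside_support[OF test_fun_DERIV] by blast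
  show "\<forall>k x. (deriv ^^ k) (deriv u) differentiable (at x)"
    using u unfolding test_fun_def by (metis funpow_Suc_right o_apply)
qed

end

lemma conv_commute: "conv k w = conv w k"
  unfolding conv_eq_integral_translate[of k w, abs_def] conv_def[of w k, abs_def]
  by (simp add: mult.commute)

lemma DERIV_conv_test_fun:
  assumes [measurable]: "k \<in> borel_measurable borel" and "integrable lborel k" and u: "test_fun u"
  shows "(conv k u has_real_derivative conv k (deriv u) x) (at x)"
proof -
  obtain B where B: "\<And>x. \<bar>u x\<bar> \<le> B" using test_fun_bounded[OF u] by blast
  obtain B' where B': "\<And>x. \<bar>deriv u x\<bar> \<le> B'" using test_fun_bounded[OF test_fun_deriv[OF u]] by blast
  show ?thesis
    by (rule DERIV_conv[OF assms(1) borel_measurable_test_fun[OF test_fun_deriv[OF u]] assms(2)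
          test_fun_DERIV[OF u] B B'])
qed

lemma conv_test_fun_bounded:
  assumes [measurable]: "k \<in> borel_measurable borel" and "integrable lborel k" and u: "test_fun u"
  obtains B where "\<And>x. \<bar>conv k u x\<bar> \<le> B"
proof -
  obtain B where "\<And>x. \<bar>u x\<bar> \<le> B" using test_fun_bounded[OF u] by blast
  then show ?thesis using abs_conv_le[OF assms(1) borel_measurable_test_fun[OF u] assms(2)] that by blast
qed

context
  fixes u :: "real \<Rightarrow> real"
  assumes u: "test_fun u"
begin

lemma Dop_test_fun: "Dop u = (\<lambda>x. resolv u x - u x)"
  using test_fun_bounded[OF u] by (metis Dop_eq test_fun_continuous[OF u])

lemma DERIV_Dop_test_fun: "(Dop u has_real_derivative Dop u x - deriv u x) (at x)"
proof -
  obtain B where "\<And>x. \<bar>u x\<bar> \<le> B" using test_fun_bounded[OF u] by blast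
  then show ?thesis
    unfolding Dop_test_fun
    using DERIV_diff[OF DERIV_resolv[OF test_fun_continuous[OF u]] test_fun_DERIV[OF u]] by auto
qed

lemma continuous_Dop_test_fun: "continuous_on UNIV (Dop u)"
  using DERIV_Dop_test_fun by (intro continuous_at_imp_continuous_on ballI DERIV_isCont) auto

lemma borel_measurable_Dop_test_fun [measurable]: "Dop u \<in> borel_measurable borel"
  by (rule borel_measurable_continuous_onI[OF continuous_Dop_test_fun])

lemma Dop_test_fun_bounded: obtains B where "\<And>x. \<bar>Dop u x\<bar> \<le> B"
proof -
  obtain B where B: "\<And>x. \<bar>u x\<bar> \<le> B" using test_fun_bounded[OF u] by blast
  have "\<bar>resolv u x\<bar> \<le> (\<integral>z. \<bar>resolv_kernel z\<bar> \<partial>lborel) * B" for x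
    unfolding resolv_eq_conv
    by (rule abs_conv_le[OF _ _ weighted_kernel_integrable[OF weighted_kernel_resolv_kernel] B]) (use u in auto)
  then have "\<bar>Dop u x\<bar> \<le> (\<integral>z. \<bar>resolv_kernel z\<bar> \<partial>lborel) * B + B" for x
    using B[of x] abs_triangle_ineq4[of "resolv u x" "u x"] unfolding Dop_test_fun
    by (smt (verit))
  then show ?thesis using that by blast
qed

lemma Dop_test_fun_eq_resolv_deriv: "Dop u = resolv (deriv u)"
proof -
  obtain B where B: "\<And>x. \<bar>Dop u x\<bar> \<le> B" using Dop_test_fun_bounded by blast
  obtain B' where B': "\<And>x. \<bar>deriv u x\<bar> \<le> B'" using test_fun_bounded[OF test_fun_deriv[OF u]] by blast
  have "resolv (\<lambda>x. Dop u x - (Dop u x - deriv u x)) = Dop u"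
    by (rule resolv_eq_if_DERIV[OF DERIV_Dop_test_fun B])
       (use B' test_fun_continuous[OF test_fun_deriv[OF u]] in auto)
  then show ?thesis by simp
qed

end

lemma conv_heaviside_deriv:
  assumes u: "test_fun u"
  shows "conv (indicator {..0}) (deriv u) x = - u x"
proof -
  define T where "T x = (\<integral>y. indicator {x..} y * deriv u y \<partial>lborel)" for x
  have "conv (indicator {..0}) (deriv u) x = T x" for x
    unfolding conv_def T_def by (intro Bochner_Integration.integral_cong) (auto simp: indicator_def)
  moreover have "(T has_real_derivative - deriv u x) (at x)" for x
    unfolding T_def[abs_def]
  proof (rule DERIV_tail_integral[OF test_fun_continuous[OF test_fun_deriv[OF u]]])
    show "set_integrable lborel {a..} (deriv u)" for a
      unfolding set_integrable_def
      by (rule integrable_mult_indicator[OF _ test_fun_integrable[OF test_fun_deriv[OF u]]]) auto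
  qed
  then have "((\<lambda>x. T x + u x) has_real_derivative 0) (at x)" for x
    using DERIV_add[OF _ test_fun_DERIV[OF u]] by fastforce
  then have const: "T x + u x = T R + u R" for x R
    by (intro DERIV_isconst_all) auto
  obtain R where R: "\<And>x. R < \<bar>x\<bar> \<Longrightarrow> u x = 0" using test_fun_support[OF u] by blast
  then have "\<And>x. R < \<bar>x\<bar> \<Longrightarrow> deriv u x = 0"
    using DERIV_eq_0_outside_support[OF test_fun_DERIV[OF u]] by blast
  then have "T (\<bar>R\<bar> + 1) = 0" "u (\<bar>R\<bar> + 1) = 0"
    unfolding T_def using R by (auto intro!: integral_eq_zero_AE AE_I2 simp: indicator_def)
  ultimately show ?thesis using const[of x "\<bar>R\<bar> + 1"] by simp
qed

section \<open>The kernel \<open>J\<^sub>2\<close>\<close>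

definition tail_mass :: "(real \<Rightarrow> real) \<Rightarrow> real \<Rightarrow> real" where
  "tail_mass J z = (\<integral>t. indicator {z..} t * J t \<partial>lborel)"

text \<open>The primitive of \<open>J - \<delta>\<close> vanishing at \<open>+\<infinity>\<close>.\<close>

definition primitive_kernel :: "(real \<Rightarrow> real) \<Rightarrow> real \<Rightarrow> real" where
  "primitive_kernel J z = indicator {..0} z - tail_mass J z"

definition J2_kernel :: "(real \<Rightarrow> real) \<Rightarrow> real \<Rightarrow> real" where
  "J2_kernel J z = primitive_kernel J z - J z"

locale unit_mass_kernel =
  fixes J :: "real \<Rightarrow> real"
  assumes continuous: "continuous_on UNIV J"
    and localized: "exp_localized J"
    and integral_1: "(\<integral>x. J x \<partial>lborel) = 1"
begin

lemma J_decay: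
  obtains C \<eta> where "0 < \<eta>" "\<And>z. \<bar>J z\<bar> \<le> C * exp (- \<eta> * \<bar>z\<bar>)"
  using localized unfolding exp_localized_def by blast

lemma borel_measurable_J [measurable]: "J \<in> borel_measurable borel"
  by (rule borel_measurable_continuous_onI[OF continuous])

lemma weighted_kernel_J: "0 \<le> g \<Longrightarrow> weighted_kernel g J"
  by (rule J_decay) (rule weighted_kernel_if_exp_decay[OF borel_measurable_J])

lemma integrable_J: "integrable lborel J"
  by (rule weighted_kernel_integrable[OF weighted_kernel_J]) auto

lemma J_bounded: obtains B where "\<And>z. \<bar>J z\<bar> \<le> B"
proof (rule J_decay)
  fix C \<eta> :: real assume "0 < \<eta>" and le: "\<And>z. \<bar>J z\<bar> \<le> C * exp (- \<eta> * \<bar>z\<bar>)"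
  have "C * exp (- \<eta> * \<bar>z\<bar>) \<le> C" for z
    using le[of 0] mult_left_mono[of "exp (- \<eta> * \<bar>z\<bar>)" 1 C] \<open>0 < \<eta>\<close> by auto
  then show ?thesis using le that order_trans by blast
qed

lemma DERIV_tail_mass: "(tail_mass J has_real_derivative - J x) (at x)"
  unfolding tail_mass_def[abs_def]
  by (rule DERIV_tail_integral[OF continuous])
     (use integrable_mult_indicator[OF _ integrable_J] in \<open>auto simp: set_integrable_def\<close>)

lemma borel_measurable_tail_mass [measurable]: "tail_mass J \<in> borel_measurable borel"
  using DERIV_tail_mass
  by (intro borel_measurable_continuous_onI continuous_at_imp_continuous_on ballI DERIV_isCont) auto

lemma abs_tail_mass_le: "\<bar>tail_mass J z\<bar> \<le> (\<integral>t. \<bar>J t\<bar> \<partial>lborel)"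
  unfolding tail_mass_def
  by (rule abs_integral_le_if_abs_le) (use integrable_J in \<open>auto simp: indicator_def\<close>)

lemma borel_measurable_primitive_kernel [measurable]: "primitive_kernel J \<in> borel_measurable borel"
  unfolding primitive_kernel_def[abs_def] by measurable

text \<open>Thanks to \<open>\<integral>J = 1\<close>, on either side of the origin \<open>primitive_kernel J z\<close> is the mass of
  \<open>J\<close> beyond \<open>z\<close>, hence it inherits the exponential decay of \<open>J\<close>.\<close>

lemma primitive_kernel_decay:
  assumes "0 < \<eta>" "\<And>z. \<bar>J z\<bar> \<le> C * exp (- \<eta> * \<bar>z\<bar>)"
  shows "\<bar>primitive_kernel J z\<bar> \<le> (C * (\<integral>t. exp (- (\<eta> / 2) * \<bar>t\<bar>) \<partial>lborel)) * exp (- (\<eta> / 2) * \<bar>z\<bar>)"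
proof -
  define side :: "real \<Rightarrow> real" where
    "side t = (if z \<le> 0 then 1 - indicator {z..} t else - indicator {z..} t)" for t
  have [measurable]: "side \<in> borel_measurable borel" unfolding side_def[abs_def] by measurable
  have "0 \<le> C" using assms(2)[of 0] by (meson abs_ge_zero order_trans exp_gt_zero zero_le_mult_iff not_le)
  have tail_int: "integrable lborel (\<lambda>t. indicator {z..} t * J t)"
    using integrable_mult_indicator[OF _ integrable_J, of "{z..}"] by simp
  have side_int: "primitive_kernel J z = (\<integral>t. side t * J t \<partial>lborel)"
    using Bochner_Integration.integral_diff[OF integrable_J tail_int] integral_1
    by (cases "z \<le> 0") (simp_all add: side_def primitive_kernel_def tail_mass_def left_diff_distrib)
  have "\<bar>side t * J t\<bar> \<le> C * exp (- (\<eta> / 2) * \<bar>t\<bar>) * exp (- (\<eta> / 2) * \<bar>z\<bar>)" for t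
  proof (cases "side t = 0")
    case False
    then have "\<bar>z\<bar> \<le> \<bar>t\<bar>" "\<bar>side t\<bar> = 1"
      by (auto simp: side_def indicator_def split: if_splits)
    then have "\<bar>side t * J t\<bar> \<le> C * (exp (- (\<eta> / 2) * \<bar>t\<bar>) * exp (- (\<eta> / 2) * \<bar>t\<bar>))"
      using assms(2)[of t] by (simp add: abs_mult flip: exp_add)
    also have "\<dots> \<le> C * (exp (- (\<eta> / 2) * \<bar>t\<bar>) * exp (- (\<eta> / 2) * \<bar>z\<bar>))"
      using \<open>\<bar>z\<bar> \<le> \<bar>t\<bar>\<close> \<open>0 < \<eta>\<close> \<open>0 \<le> C\<close> by (intro mult_left_mono) auto
    finally show ?thesis by (simp add: mult.assoc)
  qed (use \<open>0 \<le> C\<close> in simp)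
  then have "\<bar>\<integral>t. side t * J t \<partial>lborel\<bar> \<le> (\<integral>t. C * exp (- (\<eta> / 2) * \<bar>t\<bar>) * exp (- (\<eta> / 2) * \<bar>z\<bar>) \<partial>lborel)"
    by (intro abs_integral_le_if_abs_le) (use integrable_exp_neg_abs[of "\<eta> / 2"] \<open>0 < \<eta>\<close> in auto)
  then show ?thesis by (simp add: side_int)
qed

lemma weighted_kernel_J2_kernel: "0 \<le> g \<Longrightarrow> weighted_kernel g (J2_kernel J)"
proof (rule J_decay)
  fix C \<eta> :: real assume \<eta>: "0 < \<eta>" and le: "\<And>z. \<bar>J z\<bar> \<le> C * exp (- \<eta> * \<bar>z\<bar>)"
  assume "0 \<le> g"
  define L where "L = (\<integral>t. exp (- (\<eta> / 2) * \<bar>t\<bar>) \<partial>lborel)"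
  have "\<bar>J2_kernel J z\<bar> \<le> (C * L + C) * exp (- (\<eta> / 2) * \<bar>z\<bar>)" for z
  proof -
    have "0 \<le> C" using le[of 0] by (meson abs_ge_zero order_trans exp_gt_zero zero_le_mult_iff not_le)
    have "C * exp (- \<eta> * \<bar>z\<bar>) \<le> C * exp (- (\<eta> / 2) * \<bar>z\<bar>)"
      using \<open>0 \<le> C\<close> \<eta> by (intro mult_left_mono) auto
    then show ?thesis
      using primitive_kernel_decay[OF \<eta> le, of z] le[of z]
      by (simp add: J2_kernel_def L_def algebra_simps)
  qed
  then show "weighted_kernel g (J2_kernel J)"
    by (intro weighted_kernel_if_exp_decay[of _ _ "\<eta> / 2"]) (auto simp: J2_kernel_def[abs_def] \<eta> \<open>0 \<le> g\<close>)
qed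

lemma integrable_J2_kernel: "integrable lborel (J2_kernel J)"
  by (rule weighted_kernel_integrable[OF weighted_kernel_J2_kernel]) auto

lemma borel_measurable_J2_kernel [measurable]: "J2_kernel J \<in> borel_measurable borel"
  unfolding J2_kernel_def[abs_def] by measurable

definition J2 :: "(real \<Rightarrow> real) \<Rightarrow> real \<Rightarrow> real" where
  "J2 u x = u x + conv (J2_kernel J) u x"

text \<open>Both sides are the derivative of \<open>tail_mass J * u\<close>, with the derivative placed on either
  factor.\<close>

lemma conv_tail_mass_deriv:
  assumes u: "test_fun u"
  shows "conv (tail_mass J) (deriv u) x = - conv J u x"
proof -
  obtain B where B: "\<And>x. \<bar>u x\<bar> \<le> B" using test_fun_bounded[OF u] by blast
  obtain B' where B': "\<And>x. \<bar>deriv u x\<bar> \<le> B'" using test_fun_bounded[OF test_fun_deriv[OF u]] by blast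
  obtain M where M: "\<And>x. \<bar>J x\<bar> \<le> M" using J_bounded by blast
  obtain R where R: "\<And>x. R < \<bar>x\<bar> \<Longrightarrow> u x = 0" using test_fun_support[OF u] by blast
  have "(conv u (tail_mass J) has_real_derivative conv u (\<lambda>x. - J x) x) (at x)"
    by (rule DERIV_conv[OF _ _ test_fun_integrable[OF u] DERIV_tail_mass abs_tail_mass_le])
       (use u M in auto)
  moreover have "(conv (tail_mass J) u has_real_derivative conv (tail_mass J) (deriv u) x) (at x)"
    by (rule DERIV_conv_compact_support[OF _ _ abs_tail_mass_le test_fun_DERIV[OF u] B B' R])
       (use u test_fun_deriv[OF u] in auto)
  ultimately have "conv (tail_mass J) (deriv u) x = conv u (\<lambda>x. - J x) x"
    using DERIV_unique by (metis conv_commute)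
  then show ?thesis by (simp add: conv_def conv_commute[of J])
qed

lemma conv_primitive_kernel_deriv:
  assumes u: "test_fun u"
  shows "conv (primitive_kernel J) (deriv u) x = conv J u x - u x"
  using conv_diff_kernel[of "indicator {..0}" "tail_mass J" "deriv u" 1, OF _ _ _ _ abs_tail_mass_le]
    test_fun_deriv[OF u] test_fun_integrable[OF test_fun_deriv[OF u]]
  by (simp add: primitive_kernel_def[abs_def] conv_heaviside_deriv[OF u] conv_tail_mass_deriv[OF u] indicator_def)

lemma conv_J2_kernel_deriv:
  assumes u: "test_fun u"
  shows "conv (J2_kernel J) (deriv u) x = conv J u x - u x - conv J (deriv u) x"
proof -
  obtain M where M: "\<And>x. \<bar>J x\<bar> \<le> M" using J_bounded by blast
  have K: "\<bar>primitive_kernel J z\<bar> \<le> 1 + (\<integral>t. \<bar>J t\<bar> \<partial>lborel)" for z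
    using abs_tail_mass_le[of z] by (auto simp: primitive_kernel_def indicator_def)
  show ?thesis
    using conv_diff_kernel[OF _ _ _ K M test_fun_integrable[OF test_fun_deriv[OF u]]] test_fun_deriv[OF u]
    by (simp add: J2_kernel_def[abs_def] conv_primitive_kernel_deriv[OF u])
qed

context
  fixes u :: "real \<Rightarrow> real"
  assumes u: "test_fun u"
begin

lemma DERIV_J2_test_fun: "(J2 u has_real_derivative J2 (deriv u) x) (at x)"
  unfolding J2_def[abs_def]
  by (intro DERIV_add test_fun_DERIV[OF u] DERIV_conv_test_fun[OF borel_measurable_J2_kernel integrable_J2_kernel u])

lemma J2_test_fun_bounded: obtains B where "\<And>x. \<bar>J2 u x\<bar> \<le> B"
proof -
  obtain B1 where "\<And>x. \<bar>u x\<bar> \<le> B1" using test_fun_bounded[OF u] by blast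
  moreover obtain B2 where "\<And>x. \<bar>conv (J2_kernel J) u x\<bar> \<le> B2"
    using conv_test_fun_bounded[OF borel_measurable_J2_kernel integrable_J2_kernel u] by blast
  ultimately have "\<bar>J2 u x\<bar> \<le> B1 + B2" for x
    unfolding J2_def by (meson abs_triangle_ineq add_mono order_trans)
  then show ?thesis using that by blast
qed

lemma continuous_J2_test_fun: "continuous_on UNIV (J2 u)"
  using DERIV_J2_test_fun by (intro continuous_at_imp_continuous_on ballI DERIV_isCont) auto

lemma DERIV_conv_J_minus_id:
  "((\<lambda>x. conv J u x - u x) has_real_derivative conv J (deriv u) x - deriv u x) (at x)"
  by (intro DERIV_diff test_fun_DERIV[OF u] DERIV_conv_test_fun[OF borel_measurable_J integrable_J u])

lemma conv_J_minus_id_bounded: obtains B where "\<And>x. \<bar>conv J u x - u x\<bar> \<le> B"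
proof -
  obtain B1 where "\<And>x. \<bar>u x\<bar> \<le> B1" using test_fun_bounded[OF u] by blast
  moreover obtain B2 where "\<And>x. \<bar>conv J u x\<bar> \<le> B2"
    using conv_test_fun_bounded[OF borel_measurable_J integrable_J u] by blast
  ultimately have "\<bar>conv J u x - u x\<bar> \<le> B2 + B1" for x
    by (meson abs_triangle_ineq4 add_mono order_trans)
  then show ?thesis using that by blast
qed

text \<open>\<open>J * u - u + J2 u\<close> is a bounded solution of \<open>v - v' = J2 u\<close>, hence equals
  \<open>(1 - \<partial>)\<^sup>-\<^sup>1 J2 u\<close>.\<close>

lemma Dop_J2_test_fun: "Dop (J2 u) = (\<lambda>x. conv J u x - u x)"
proof -
  define f where "f x = J2 u x + (conv J u x - u x)" for x
  obtain B1 where B1: "\<And>x. \<bar>J2 u x\<bar> \<le> B1" using J2_test_fun_bounded by blast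
  obtain B2 where B2: "\<And>x. \<bar>conv J u x - u x\<bar> \<le> B2" using conv_J_minus_id_bounded by blast
  have "(f has_real_derivative J2 (deriv u) x + (conv J (deriv u) x - deriv u x)) (at x)" for x
    unfolding f_def[abs_def] by (intro DERIV_add DERIV_J2_test_fun DERIV_conv_J_minus_id)
  then have "(f has_real_derivative conv J u x - u x) (at x)" for x
    by (simp add: J2_def conv_J2_kernel_deriv[OF u])
  moreover have "\<bar>f x\<bar> \<le> B1 + B2" for x
    using B1[of x] B2[of x] abs_triangle_ineq[of "J2 u x" "conv J u x - u x"] unfolding f_def by linarith
  ultimately have "resolv (\<lambda>x. f x - (conv J u x - u x)) = f"
    by (rule resolv_eq_if_DERIV) (use continuous_J2_test_fun B1 in \<open>auto simp: f_def\<close>)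
  then have "resolv (J2 u) = f" by (simp add: f_def)
  then show ?thesis
    by (simp add: Dop_eq[OF continuous_J2_test_fun B1] f_def)
qed

lemma J2_Dop_test_fun: "J2 (Dop u) = (\<lambda>x. conv J u x - u x)"
proof -
  obtain B where B: "\<And>x. \<bar>Dop u x\<bar> \<le> B" using Dop_test_fun_bounded[OF u] by blast
  obtain B' where B': "\<And>x. \<bar>deriv u x\<bar> \<le> B'" using test_fun_bounded[OF test_fun_deriv[OF u]] by blast
  obtain B2 where B2: "\<And>x. \<bar>conv J u x - u x\<bar> \<le> B2" using conv_J_minus_id_bounded by blast
  have [measurable]: "deriv u \<in> borel_measurable borel" "Dop u \<in> borel_measurable borel"
    by (rule borel_measurable_test_fun[OF test_fun_deriv[OF u]] borel_measurable_Dop_test_fun[OF u])+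
  define w where "w x = Dop u x - deriv u x" for x
  have w_le: "\<bar>w x\<bar> \<le> B + B'" for x using B[of x] B'[of x] unfolding w_def by linarith
  have d: "(J2 (Dop u) has_real_derivative w x + conv (J2_kernel J) w x) (at x)" for x
    unfolding J2_def[abs_def]
    by (intro DERIV_add DERIV_Dop_test_fun[OF u, folded w_def]
          DERIV_conv[OF borel_measurable_J2_kernel _ integrable_J2_kernel
            DERIV_Dop_test_fun[OF u, folded w_def] B w_le])
       (simp add: w_def[abs_def])
  have b: "\<bar>J2 (Dop u) x\<bar> \<le> B + (\<integral>z. \<bar>J2_kernel J z\<bar> \<partial>lborel) * B" for x
    using B[of x] abs_conv_le[OF borel_measurable_J2_kernel borel_measurable_Dop_test_fun[OF u] integrable_J2_kernel B, of x]
      abs_triangle_ineq[of "Dop u x" "conv (J2_kernel J) (Dop u) x"]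
    unfolding J2_def by linarith
  have s: "J2 (Dop u) x - (w x + conv (J2_kernel J) w x)
      = (conv J u x - u x) - (conv J (deriv u) x - deriv u x)" for x
    using conv_diff[OF borel_measurable_J2_kernel borel_measurable_Dop_test_fun[OF u]
        borel_measurable_test_fun[OF test_fun_deriv[OF u]] integrable_J2_kernel B B', of x]
      conv_J2_kernel_deriv[OF u, of x]
    by (simp add: J2_def w_def[abs_def])
  show ?thesis
    by (rule bounded_solution_of_ode_eq[OF d b DERIV_conv_J_minus_id B2 s])
qed

end

end

section \<open>Weighted \<open>H\<^sup>1\<close> bounds\<close>

lemma sqrt_le_sqrt_mult_sqrt: "a \<le> c * b \<Longrightarrow> 0 \<le> c \<Longrightarrow> sqrt a \<le> sqrt c * sqrt b"
  by (metis real_sqrt_le_mono real_sqrt_mult)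

lemma H1w_norm_eq: "H1w_norm g w = sqrt (L2w_sq g w) + sqrt (L2w_sq g (deriv w))"
  by (simp add: H1w_norm_def L2w_def)

lemma H1w_add_conv:
  fixes k w w' :: "real \<Rightarrow> real"
  assumes k: "weighted_kernel g k" and "0 \<le> g"
    and w: "\<And>x. (w has_real_derivative w' x) (at x)" "\<And>x. \<bar>w x\<bar> \<le> B" "\<And>x. \<bar>w' x\<bar> \<le> B'"
    and w'_cont: "continuous_on UNIV w'" and L2: "in_L2w g w" "in_L2w g w'"
  shows "in_H1w g (\<lambda>x. w x + conv k w x) \<and>
    H1w_norm g (\<lambda>x. w x + conv k w x) \<le> sqrt (2 + 2 * young_const g k) * H1w_norm g w"
proof -
  define Ck where "Ck = young_const g k"
  have [measurable]: "k \<in> borel_measurable borel" using k by (simp add: weighted_kernel_def)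
  have [measurable]: "w \<in> borel_measurable borel"
    using w(1) by (intro borel_measurable_continuous_onI continuous_at_imp_continuous_on ballI DERIV_isCont) auto
  have [measurable]: "w' \<in> borel_measurable borel" by (rule borel_measurable_continuous_onI[OF w'_cont])
  have [measurable]: "conv k f \<in> borel_measurable borel" if [measurable]: "f \<in> borel_measurable borel" for f
    unfolding conv_def[abs_def] by measurable
  have D: "((\<lambda>x. w x + conv k w x) has_real_derivative w' x + conv k w' x) (at x)" for x
    by (intro DERIV_add w DERIV_conv[OF _ _ weighted_kernel_integrable[OF k \<open>0 \<le> g\<close>] w]) auto
  then have deriv_eq: "deriv (\<lambda>x. w x + conv k w x) = (\<lambda>x. w' x + conv k w' x)"
    by (intro ext DERIV_imp_deriv)
  have deriv_w: "deriv w = w'" using w(1) by (intro ext DERIV_imp_deriv)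
  have bound: "in_L2w g (\<lambda>x. f x + conv k f x) \<and> L2w_sq g (\<lambda>x. f x + conv k f x) \<le> (2 + 2 * Ck) * L2w_sq g f"
    if [measurable]: "f \<in> borel_measurable borel" and f: "in_L2w g f" for f
  proof
    note young = weighted_young[OF k \<open>0 \<le> g\<close> that]
    note sum = L2w_add_sq_le[of f "conv k f", OF _ _ f young(1)]
    show "in_L2w g (\<lambda>x. f x + conv k f x)" using sum(1) by simp
    show "L2w_sq g (\<lambda>x. f x + conv k f x) \<le> (2 + 2 * Ck) * L2w_sq g f"
      using sum(2) young(2) by (simp add: Ck_def algebra_simps)
  qed
  have "H1w_norm g (\<lambda>x. w x + conv k w x)
      = sqrt (L2w_sq g (\<lambda>x. w x + conv k w x)) + sqrt (L2w_sq g (\<lambda>x. w' x + conv k w' x))"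
    by (simp add: H1w_norm_eq deriv_eq)
  also have "\<dots> \<le> sqrt (2 + 2 * Ck) * sqrt (L2w_sq g w) + sqrt (2 + 2 * Ck) * sqrt (L2w_sq g w')"
    using bound[of w] bound[of w'] L2 young_const_nonneg[of g k]
    by (intro add_mono sqrt_le_sqrt_mult_sqrt) (auto simp: Ck_def)
  also have "\<dots> = sqrt (2 + 2 * young_const g k) * H1w_norm g w"
    by (simp add: Ck_def H1w_norm_eq deriv_w algebra_simps)
  finally show ?thesis
    using bound[of w] bound[of w'] L2 D unfolding in_H1w_def deriv_eq
    by (auto simp: real_differentiable_def)
qed

lemma L2w_sq_deriv_le_M12_norm: "sqrt (L2w_sq g (deriv u)) \<le> M12_norm (g - 1) u"
  unfolding M12_norm_def by (rule real_sqrt_le_mono) simp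

definition Dop_H1w_const :: "real \<Rightarrow> real" where
  "Dop_H1w_const g = sqrt (young_const g resolv_kernel) + sqrt (2 * young_const g resolv_kernel + 2)"

lemma H1w_Dop_test_fun:
  assumes u: "test_fun u" and "0 \<le> g"
  shows "in_H1w g (Dop u) \<and> H1w_norm g (Dop u) \<le> Dop_H1w_const g * M12_norm (g - 1) u"
proof -
  define CE where "CE = young_const g resolv_kernel"
  have [measurable]: "deriv u \<in> borel_measurable borel" "Dop u \<in> borel_measurable borel"
    by (rule borel_measurable_test_fun[OF test_fun_deriv[OF u]] borel_measurable_Dop_test_fun[OF u])+
  have u'_L2: "in_L2w g (deriv u)" by (rule test_fun_in_L2w[OF test_fun_deriv[OF u]])
  note young = weighted_young[OF weighted_kernel_resolv_kernel[OF \<open>0 \<le> g\<close>] \<open>0 \<le> g\<close> _ u'_L2]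
  have Dop_conv: "Dop u = conv resolv_kernel (deriv u)"
    by (simp add: Dop_test_fun_eq_resolv_deriv[OF u] resolv_eq_conv)
  have deriv_Dop: "deriv (Dop u) = (\<lambda>x. Dop u x + - deriv u x)"
    using DERIV_Dop_test_fun[OF u] by (intro ext DERIV_imp_deriv) simp
  have Dop_L2: "in_L2w g (Dop u)" "L2w_sq g (Dop u) \<le> CE * L2w_sq g (deriv u)"
    using young by (simp_all add: Dop_conv CE_def)
  note sum = L2w_add_sq_le[of "Dop u" "\<lambda>x. - deriv u x", OF _ _ Dop_L2(1)]
  have "H1w_norm g (Dop u) = sqrt (L2w_sq g (Dop u)) + sqrt (L2w_sq g (\<lambda>x. Dop u x + - deriv u x))"
    by (simp add: H1w_norm_eq deriv_Dop)
  also have "\<dots> \<le> sqrt CE * sqrt (L2w_sq g (deriv u)) + sqrt (2 * CE + 2) * sqrt (L2w_sq g (deriv u))"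
    using Dop_L2(2) sum(2) u'_L2 young_const_nonneg[of g resolv_kernel]
    by (intro add_mono sqrt_le_sqrt_mult_sqrt) (auto simp: CE_def algebra_simps)
  also have "\<dots> \<le> Dop_H1w_const g * M12_norm (g - 1) u"
    using L2w_sq_deriv_le_M12_norm[where g = g and u = u] young_const_nonneg[of g resolv_kernel]
    by (simp add: Dop_H1w_const_def CE_def distrib_right[symmetric] mult_left_mono)
  finally show ?thesis
    using Dop_L2(1) sum(1) u'_L2 DERIV_Dop_test_fun[OF u] unfolding in_H1w_def deriv_Dop
    by (auto simp: real_differentiable_def algebra_simps)
qed

context unit_mass_kernel
begin

lemma H1w_J2_test_fun:
  assumes u: "test_fun u" and "0 \<le> g"
  shows "in_H1w g (J2 u) \<and> H1w_norm g (J2 u) \<le> sqrt (2 + 2 * young_const g (J2_kernel J)) * H1w_norm g u"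
proof -
  obtain B where B: "\<And>x. \<bar>u x\<bar> \<le> B" using test_fun_bounded[OF u] by blast
  obtain B' where B': "\<And>x. \<bar>deriv u x\<bar> \<le> B'" using test_fun_bounded[OF test_fun_deriv[OF u]] by blast
  show ?thesis
    using H1w_add_conv[OF weighted_kernel_J2_kernel[OF \<open>0 \<le> g\<close>] \<open>0 \<le> g\<close> test_fun_DERIV[OF u] B B'
        test_fun_continuous[OF test_fun_deriv[OF u]] test_fun_in_L2w[OF u] test_fun_in_L2w[OF test_fun_deriv[OF u]]]
    by (simp add: J2_def[abs_def])
qed

lemma H1w_J2_Dop_test_fun:
  assumes u: "test_fun u" and "0 \<le> g"
  shows "in_H1w g (J2 (Dop u)) \<and>
    H1w_norm g (J2 (Dop u)) \<le> sqrt (2 + 2 * young_const g (J2_kernel J)) * Dop_H1w_const g * M12_norm (g - 1) u"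
proof -
  obtain B where B: "\<And>x. \<bar>Dop u x\<bar> \<le> B" using Dop_test_fun_bounded[OF u] by blast
  obtain B' where B': "\<And>x. \<bar>deriv u x\<bar> \<le> B'" using test_fun_bounded[OF test_fun_deriv[OF u]] by blast
  note Dop_H1w = H1w_Dop_test_fun[OF u \<open>0 \<le> g\<close>]
  have "deriv (Dop u) = (\<lambda>x. Dop u x - deriv u x)"
    using DERIV_Dop_test_fun[OF u] by (intro ext DERIV_imp_deriv)
  then have L2: "in_L2w g (Dop u)" "in_L2w g (\<lambda>x. Dop u x - deriv u x)"
    using Dop_H1w by (auto simp: in_H1w_def)
  have B'': "\<bar>Dop u x - deriv u x\<bar> \<le> B + B'" for x
    using B[of x] B'[of x] by linarith
  have cont: "continuous_on UNIV (\<lambda>x. Dop u x - deriv u x)"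
    by (intro continuous_intros continuous_Dop_test_fun[OF u] test_fun_continuous[OF test_fun_deriv[OF u]])
  have "in_H1w g (J2 (Dop u)) \<and>
      H1w_norm g (J2 (Dop u)) \<le> sqrt (2 + 2 * young_const g (J2_kernel J)) * H1w_norm g (Dop u)"
    using H1w_add_conv[OF weighted_kernel_J2_kernel[OF \<open>0 \<le> g\<close>] \<open>0 \<le> g\<close> DERIV_Dop_test_fun[OF u] B B'' cont L2]
    by (simp add: J2_def[abs_def])
  moreover have "sqrt (2 + 2 * young_const g (J2_kernel J)) * H1w_norm g (Dop u)
      \<le> sqrt (2 + 2 * young_const g (J2_kernel J)) * (Dop_H1w_const g * M12_norm (g - 1) u)"
    using Dop_H1w young_const_nonneg[of g "J2_kernel J"] by (intro mult_left_mono) auto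
  ultimately show ?thesis by (simp add: mult.assoc)
qed

end

theorem lemma4p5:
  fixes J :: "real \<Rightarrow> real" and \<gamma> :: real
  assumes "exp_localized J"
    and "\<And>x. J (- x) = J x"
    and "\<And>x. J differentiable (at x)"
    and "\<And>x. deriv J differentiable (at x)"
    and "continuous_on UNIV (deriv (deriv J))"
    and "(\<integral>x. J x \<partial>lborel) = 1"
    and "0 < \<gamma>"
  shows "\<exists>(c::real) (g::real \<Rightarrow> real). integrable lborel g \<and>
    (let J2 = (\<lambda>u x. c * u x + conv g u x) in
      (\<forall>u. test_fun u \<longrightarrow>
          (\<lambda>x. conv J u x - u x) = Dop (J2 u) \<and>
          (\<lambda>x. conv J u x - u x) = J2 (Dop u) \<and>
          Dop (J2 u) = J2 (Dop u)) \<and>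
      (\<exists>C. \<forall>u. test_fun u \<longrightarrow>
          in_H1w \<gamma> (J2 u) \<and> H1w_norm \<gamma> (J2 u) \<le> C * H1w_norm \<gamma> u) \<and>
      (\<exists>C. \<forall>u. test_fun u \<longrightarrow>
          in_H1w \<gamma> (Dop u) \<and> H1w_norm \<gamma> (Dop u) \<le> C * M12_norm (\<gamma> - 1) u) \<and>
      (\<exists>C. \<forall>u. test_fun u \<longrightarrow>
          in_H1w \<gamma> (J2 (Dop u)) \<and> H1w_norm \<gamma> (J2 (Dop u)) \<le> C * M12_norm (\<gamma> - 1) u))"
proof -
  have "continuous_on UNIV J"
    using assms(3) by (intro continuous_at_imp_continuous_on ballI differentiable_imp_continuous_within) auto
  then interpret unit_mass_kernel J by unfold_locales (use assms(1,6) in auto)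
  have "0 \<le> \<gamma>" using assms(7) by simp
  have J2_eq: "(\<lambda>u x. 1 * u x + conv (J2_kernel J) u x) = J2" by (simp add: J2_def[abs_def])
  show ?thesis
  proof (intro exI[of _ 1] exI[of _ "J2_kernel J"] conjI integrable_J2_kernel, subst J2_eq, unfold Let_def,
      intro conjI allI impI)
    fix u assume "test_fun u"
    then show "(\<lambda>x. conv J u x - u x) = Dop (J2 u)" "(\<lambda>x. conv J u x - u x) = J2 (Dop u)"
      "Dop (J2 u) = J2 (Dop u)"
      by (simp_all add: Dop_J2_test_fun J2_Dop_test_fun)
  qed (use H1w_J2_test_fun H1w_Dop_test_fun H1w_J2_Dop_test_fun \<open>0 \<le> \<gamma>\<close> in blast)+
qed

end
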